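(* Let $\gamma\in(0,1)$ and $c\ge 0$. Define the deterministic sequence $\bar v^0=0$ and, for $n\ge 1$, $$\hat v^n = c+\gamma \bar v^{n-1},\qquad \bar v^n=\Big(1-\tfrac1n\Big)\bar v^{n-1}+\tfrac1n \hat v^n .$$ Then for all $n=0,1,2,\dots$, $$\bar v^n \ \ge\ \frac{c}{1-\gamma}\Big(1-(n+1)^{-(1-\gamma)}\Big).$$
   Context: This is approximate value iteration for a single-state, single-action problem with deterministic one-period reward $c$, discount factor $\gamma$, initial approximation $0$, and stepsize $\alpha_{n-1}=1/n$. The true value is $c/(1-\gamma)$. *)

theory Defs
  imports Complex_Main
begin

primrec avi_vbar :: "real \<Rightarrow> real \<Rightarrow> nat \<Rightarrow> real" where
  "avi_vbar c \<gamma> 0 = 0"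
| "avi_vbar c \<gamma> (Suc m) =
     (let n = real (Suc m); vh = c + \<gamma> * avi_vbar c \<gamma> m
      in (1 - 1 / n) * avi_vbar c \<gamma> m + (1 / n) * vh)"

end

theory Submission
  imports Defs
begin

text \<open>With \<open>V = c / (1 - \<gamma>)\<close> and \<open>a = 1 - \<gamma>\<close>, the error \<open>V - v\<^sup>n\<close> is multiplied by
  \<open>1 - a / n\<close> at step \<open>n\<close>. Since \<open>1 - a t \<le> (1 + t)\<^sup>-\<^sup>a\<close>, one step of this contraction
  carries the bound \<open>V (n + 1)\<^sup>-\<^sup>a\<close> on the error at time \<open>n\<close> to \<open>V (n + 2)\<^sup>-\<^sup>a\<close> at
  time \<open>n + 1\<close>.\<close>

lemma one_plus_powr_neg_ge:
  fixes a t :: real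
  assumes "0 \<le> a" "0 \<le> t"
  shows "1 - a * t \<le> (1 + t) powr (-a)"
proof -
  have "a * ln (1 + t) \<le> a * t"
    using assms by (simp add: mult_left_mono ln_add_one_self_le_self)
  moreover have "1 - a * ln (1 + t) \<le> exp (-a * ln (1 + t))"
    using exp_ge_add_one_self[of "-a * ln (1 + t)"] by simp
  ultimately have "1 - a * t \<le> exp (-a * ln (1 + t))" by linarith
  with assms show ?thesis by (simp add: powr_def)
qed

lemma powr_neg_contraction_step:
  fixes a x :: real
  assumes "0 \<le> a" "0 < x"
  shows "(1 - a / x) * x powr (-a) \<le> (x + 1) powr (-a)"
proof -
  have "x + 1 = x * (1 + 1 / x)" using assms by (simp add: field_simps)
  then have "(x + 1) powr (-a) = x powr (-a) * (1 + 1 / x) powr (-a)"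
    using assms by (simp add: powr_mult)
  moreover have "1 - a / x \<le> (1 + 1 / x) powr (-a)"
    using one_plus_powr_neg_ge[of a "1 / x"] assms by simp
  ultimately show ?thesis by (simp add: mult_left_mono mult.commute)
qed

lemma avi_vbar_Suc:
  "avi_vbar c \<gamma> (Suc m) = avi_vbar c \<gamma> m + (c - (1 - \<gamma>) * avi_vbar c \<gamma> m) / (real m + 1)"
  by (simp add: Let_def add_divide_distrib diff_divide_distrib algebra_simps)

lemma avi_vbar_error_Suc:
  fixes c \<gamma> :: real
  assumes "\<gamma> \<noteq> 1"
  shows "c / (1 - \<gamma>) - avi_vbar c \<gamma> (Suc m)
           = (1 - (1 - \<gamma>) / (real m + 1)) * (c / (1 - \<gamma>) - avi_vbar c \<gamma> m)"
proof -
  define V where "V = c / (1 - \<gamma>)"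
  define v where "v = avi_vbar c \<gamma> m"
  have "c = (1 - \<gamma>) * V" using assms by (simp add: V_def)
  then have "V - avi_vbar c \<gamma> (Suc m) = (V - v) - (1 - \<gamma>) * (V - v) / (real m + 1)"
    unfolding avi_vbar_Suc v_def[symmetric] by (simp add: algebra_simps)
  also have "\<dots> = (1 - (1 - \<gamma>) / (real m + 1)) * (V - v)"
    by (simp add: algebra_simps)
  finally show ?thesis unfolding V_def v_def .
qed

lemma avi_vbar_error_le:
  fixes c \<gamma> :: real
  assumes "0 \<le> \<gamma>" "\<gamma> < 1" "0 \<le> c"
  shows "c / (1 - \<gamma>) - avi_vbar c \<gamma> n \<le> c / (1 - \<gamma>) * (real n + 1) powr (-(1 - \<gamma>))"
proof (induction n)
  case 0
  show ?case by simp
next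
  case (Suc m)
  define a where "a = 1 - \<gamma>"
  define V where "V = c / a"
  have "0 \<le> V" "0 \<le> a" using assms by (auto simp: V_def a_def)
  have contraction_nonneg: "0 \<le> 1 - a / (real m + 1)"
    using assms by (simp add: a_def field_simps)
  have "V - avi_vbar c \<gamma> (Suc m) = (1 - a / (real m + 1)) * (V - avi_vbar c \<gamma> m)"
    using avi_vbar_error_Suc assms by (simp add: V_def a_def)
  also have "\<dots> \<le> (1 - a / (real m + 1)) * (V * (real m + 1) powr (-a))"
    using mult_left_mono[OF Suc contraction_nonneg] by (simp add: V_def a_def)
  also have "\<dots> = V * ((1 - a / (real m + 1)) * (real m + 1) powr (-a))"
    by simp
  also have "\<dots> \<le> V * (real m + 2) powr (-a)"
    using powr_neg_contraction_step[of a "real m + 1"] \<open>0 \<le> a\<close> \<open>0 \<le> V\<close>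
    by (simp add: mult_left_mono add.assoc)
  finally show ?case by (simp add: V_def a_def add.commute)
qed

theorem theorem1:
  fixes c \<gamma> :: real and n :: nat
  assumes "0 < \<gamma>" and "\<gamma> < 1" and "0 \<le> c"
  shows "avi_vbar c \<gamma> n \<ge> c / (1 - \<gamma>) * (1 - (real n + 1) powr (-(1 - \<gamma>)))"
  using avi_vbar_error_le[of \<gamma> c n] assms by (simp add: right_diff_distrib)

end
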